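(* Let $\mathsf E$ be a closed subset of $\mathbb R$ whose gaps satisfy the three Craig-type conditions (with some $\delta>0$). Consider the space of sequences $y=(y_j)$, $y_j\in\mathbb R/\pi\mathbb Z$, with $\mu_j=a_j+\gamma_j\sin^2y_j$, equipped with the metric $\|y-\widetilde y\|=\sup_j\gamma_j^{1/2}|y_j-\widetilde y_j|$, and define vector fields $\Psi,\Xi$ by $$\Psi_j(y)=\Big(\tfrac12Q_1(y)+\mu_j\Big)W_j(y),\quad \Xi_j(y)=\Big(\tfrac{Q_2(y)}4+\tfrac18Q_1(y)^2-\tfrac12\mu_jQ_1(y)+\mu_j^2\Big)W_j(y),$$ with $Q_1=\sum_k(a_k+b_k-2\mu_k)$, $Q_2=\sum_k(a_k^2+b_k^2-2\mu_k^2)$, $W_j=\prod_{k\ne j}\sqrt{\frac{(a_k-\mu_j)(b_k-\mu_j)}{(\mu_k-\mu_j)^2}}$. Then $\Psi$ and $\Xi$ are Lipschitz: there is $L<\infty$ with $\sup_j\gamma_j^{1/2}|\Psi_j(y)-\Psi_j(\widetilde y)|\le L\|y-\widetilde y\|$ and likewise for $\Xi$.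
   Context: Gaps $G_j=(a_j,b_j)$ of $\mathsf E$, indexed by a countable set with a distinguished reference gap $G_0$; $\gamma_j=|G_j|$, $\eta_{jk}=\operatorname{dist}(G_j,G_k)$, $C_j=\sup_{z\in G_j}\big(\prod_{G_k<G_j}\frac{a_k-z}{b_k-z}\prod_{G_j<G_k}\frac{b_k-z}{a_k-z}\big)^{1/2}$ ($G_k<G_j$: $G_k$ lies left of $G_j$). Craig-type conditions: $\sum_k(1+\eta_{k0})C_k\gamma_k^{1/2}<\infty$; $\sup_j\sum_{k\neq j}C_j^3C_k^2(1+\eta_{0j}^2)\gamma_j^{1/2}\gamma_k^{1/2}/\eta_{jk}<\infty$; $\sup_j\sup_{k\ne j}\gamma_j^{1/2}\gamma_k^{1/2}/(\gamma_j^\delta\eta_{jk})<\infty$. $|\cdot|$ on $\mathbb R/\pi\mathbb Z$ is distance to $0$. *)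

theory Defs
  imports "HOL-Analysis.Analysis"
begin

text \<open>Gaps G_j = (a j, b j), j in an index set J (a subset of nat, hence countable),
  reference gap G_0 with index 0.\<close>

definition gam :: "(nat \<Rightarrow> real) \<Rightarrow> (nat \<Rightarrow> real) \<Rightarrow> nat \<Rightarrow> real" where
  "gam a b j = b j - a j"

definition eta :: "(nat \<Rightarrow> real) \<Rightarrow> (nat \<Rightarrow> real) \<Rightarrow> nat \<Rightarrow> nat \<Rightarrow> real" where
  "eta a b j k = setdist {a j<..<b j} {a k<..<b k}"

definition Cfac :: "(nat \<Rightarrow> real) \<Rightarrow> (nat \<Rightarrow> real) \<Rightarrow> nat \<Rightarrow> nat \<Rightarrow> real \<Rightarrow> real" where
  "Cfac a b j k z = (if b k \<le> a j then (a k - z) / (b k - z) else (b k - z) / (a k - z))"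

text \<open>All factors are \<ge> 1, so the infinite product is the supremum of the finite
  partial products (possibly +\<infinity>); C_j is an extended real.\<close>
definition Cc :: "(nat \<Rightarrow> real) \<Rightarrow> (nat \<Rightarrow> real) \<Rightarrow> nat set \<Rightarrow> nat \<Rightarrow> ereal" where
  "Cc a b J j = (SUP z\<in>{a j<..<b j}. SUP F\<in>{F. finite F \<and> F \<subseteq> J - {j}}.
                   ereal (sqrt (\<Prod>k\<in>F. Cfac a b j k z)))"

definition cdist :: "real \<Rightarrow> real" where
  "cdist x = \<bar>x - pi * of_int (round (x / pi))\<bar>"

definition mu :: "(nat \<Rightarrow> real) \<Rightarrow> (nat \<Rightarrow> real) \<Rightarrow> (nat \<Rightarrow> real) \<Rightarrow> nat \<Rightarrow> real" where
  "mu a b y j = a j + gam a b j * (sin (y j))\<^sup>2"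

definition Q1 :: "(nat \<Rightarrow> real) \<Rightarrow> (nat \<Rightarrow> real) \<Rightarrow> nat set \<Rightarrow> (nat \<Rightarrow> real) \<Rightarrow> real" where
  "Q1 a b J y = (\<Sum>\<^sub>\<infinity>k\<in>J. a k + b k - 2 * mu a b y k)"

definition Q2 :: "(nat \<Rightarrow> real) \<Rightarrow> (nat \<Rightarrow> real) \<Rightarrow> nat set \<Rightarrow> (nat \<Rightarrow> real) \<Rightarrow> real" where
  "Q2 a b J y = (\<Sum>\<^sub>\<infinity>k\<in>J. (a k)\<^sup>2 + (b k)\<^sup>2 - 2 * (mu a b y k)\<^sup>2)"

definition W :: "(nat \<Rightarrow> real) \<Rightarrow> (nat \<Rightarrow> real) \<Rightarrow> nat set \<Rightarrow> (nat \<Rightarrow> real) \<Rightarrow> nat \<Rightarrow> real" where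
  "W a b J y j = (\<Prod>k. if k \<in> J - {j} then
      sqrt (((a k - mu a b y j) * (b k - mu a b y j)) / (mu a b y k - mu a b y j)\<^sup>2) else 1)"

definition Psi :: "(nat \<Rightarrow> real) \<Rightarrow> (nat \<Rightarrow> real) \<Rightarrow> nat set \<Rightarrow> (nat \<Rightarrow> real) \<Rightarrow> nat \<Rightarrow> real" where
  "Psi a b J y j = (Q1 a b J y / 2 + mu a b y j) * W a b J y j"

definition Xi :: "(nat \<Rightarrow> real) \<Rightarrow> (nat \<Rightarrow> real) \<Rightarrow> nat set \<Rightarrow> (nat \<Rightarrow> real) \<Rightarrow> nat \<Rightarrow> real" where
  "Xi a b J y j = (Q2 a b J y / 4 + (Q1 a b J y)\<^sup>2 / 8 - mu a b y j * Q1 a b J y / 2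
                    + (mu a b y j)\<^sup>2) * W a b J y j"

definition ynorm :: "(nat \<Rightarrow> real) \<Rightarrow> (nat \<Rightarrow> real) \<Rightarrow> nat set \<Rightarrow> (nat \<Rightarrow> real) \<Rightarrow> (nat \<Rightarrow> real) \<Rightarrow> real" where
  "ynorm a b J y y' = (SUP j\<in>J. sqrt (gam a b j) * cdist (y j - y' j))"

end

theory Submission
  imports Defs
begin

text \<open>Each factor of \<open>W\<^sub>j\<close> is the square root of
  \<open>(a\<^sub>k - \<mu>\<^sub>j)(b\<^sub>k - \<mu>\<^sub>j)/(\<mu>\<^sub>k - \<mu>\<^sub>j)\<^sup>2\<close>, so \<open>W\<^sub>j\<close> is the exponential of half a
  series of logarithms. Because \<open>\<mu>\<^sub>j\<close> stays at distance \<open>\<eta>\<^sub>j\<^sub>k > 0\<close> from the closed gap \<open>k\<close>,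
  the \<open>k\<close>-th logarithm is bounded by \<open>\<gamma>\<^sub>k/\<eta>\<^sub>j\<^sub>k\<close> and is Lipschitz in \<open>(\<mu>\<^sub>j, \<mu>\<^sub>k)\<close> with
  constants \<open>\<gamma>\<^sub>k/\<eta>\<^sub>j\<^sub>k\<^sup>2\<close> and \<open>2/\<eta>\<^sub>j\<^sub>k\<close>. Since \<open>|\<mu>\<^sub>k - \<mu>\<^sub>k'| \<le> \<gamma>\<^sub>k\<^sup>1\<^sup>/\<^sup>2 \<parallel>y - y'\<parallel>\<close> and the
  third Craig condition bounds \<open>\<gamma>\<^sub>j\<^sup>1\<^sup>/\<^sup>2\<gamma>\<^sub>k\<^sup>1\<^sup>/\<^sup>2/\<eta>\<^sub>j\<^sub>k\<close>, the exponent changes by at most a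
  constant times \<open>\<gamma>\<^sub>j\<^sup>-\<^sup>1\<^sup>/\<^sup>2 \<Sum>\<^sub>k \<gamma>\<^sub>j\<^sup>1\<^sup>/\<^sup>2\<gamma>\<^sub>k\<^sup>1\<^sup>/\<^sup>2/\<eta>\<^sub>j\<^sub>k \<parallel>y - y'\<parallel>\<close>, while the partial products
  defining \<open>C\<^sub>j\<close> give \<open>W\<^sub>j \<le> C\<^sub>j\<close>. The first Craig condition makes \<open>Q\<^sub>1\<close>, \<open>Q\<^sub>2\<close> bounded and
  Lipschitz and bounds \<open>|\<mu>\<^sub>j|\<close> by a multiple of \<open>1 + \<eta>\<^sub>j\<^sub>0\<close>; the second condition absorbs the
  resulting factors \<open>C\<^sub>j (1 + \<eta>\<^sub>j\<^sub>0)\<^sup>2\<close> when the prefactors of \<open>\<Psi>\<^sub>j\<close> and \<open>\<Xi>\<^sub>j\<close> are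
  multiplied by \<open>W\<^sub>j\<close>.\<close>

lemma cdist_nonneg: "0 \<le> cdist x"
  by (simp add: cdist_def)

lemma cdist_le_pi_half: "cdist x \<le> pi / 2"
proof -
  have "x - pi * of_int (round (x / pi)) = pi * (x / pi - of_int (round (x / pi)))"
    by (simp add: right_diff_distrib)
  hence "cdist x = pi * \<bar>x / pi - of_int (round (x / pi))\<bar>"
    by (simp add: cdist_def abs_mult)
  also have "\<dots> \<le> pi * (1 / 2)"
    using of_int_round_abs_le[of "x / pi"] by (intro mult_left_mono) (auto simp: abs_minus_commute)
  finally show ?thesis by simp
qed

lemma abs_sin_sq_diff_le_cdist: "\<bar>(sin u)\<^sup>2 - (sin v)\<^sup>2\<bar> \<le> cdist (u - v)"
proof -
  define r where "r = (u - v) - pi * of_int (round ((u - v) / pi))"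
  have "\<bar>sin (u - v)\<bar> = \<bar>sin r\<bar>"
    unfolding r_def by (simp add: sin_diff abs_mult)
  also have "\<dots> \<le> cdist (u - v)"
    using abs_sin_x_le_abs_x[of r] by (simp add: r_def cdist_def)
  finally have sin_diff_le: "\<bar>sin (u - v)\<bar> \<le> cdist (u - v)" .
  have "(sin u)\<^sup>2 - (sin v)\<^sup>2 = sin (u - v) * sin (u + v)"
  proof -
    have "sin (u - v) * sin (u + v) = (sin u * cos v)\<^sup>2 - (cos u * sin v)\<^sup>2"
      unfolding sin_diff sin_add by (simp add: power2_eq_square algebra_simps)
    thus ?thesis unfolding power_mult_distrib cos_squared_eq by (simp add: algebra_simps)
  qed
  hence "\<bar>(sin u)\<^sup>2 - (sin v)\<^sup>2\<bar> \<le> \<bar>sin (u - v)\<bar> * 1"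
    by (simp add: abs_mult mult_left_le)
  with sin_diff_le show ?thesis by simp
qed

text \<open>The \<open>k\<close>-th factor of \<open>W\<^sub>j\<close> is \<open>sqrt (gap_factor (a k) (b k) \<mu>\<^sub>k \<mu>\<^sub>j)\<close>. Lemmas about
  \<open>z\<close> to the right of the gap are transferred to the left by \<open>gap_factor_reflect\<close>.\<close>

definition gap_factor :: "real \<Rightarrow> real \<Rightarrow> real \<Rightarrow> real \<Rightarrow> real" where
  "gap_factor a b m z = ((a - z) * (b - z)) / (m - z)\<^sup>2"

lemma gap_factor_reflect: "gap_factor (-b) (-a) (-m) (-z) = gap_factor a b m z"
proof -
  have "(-m - -z)\<^sup>2 = (m - z)\<^sup>2" "(-b - -z) * (-a - -z) = (a - z) * (b - z)"
    by (simp_all add: power2_eq_square algebra_simps)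
  thus ?thesis by (simp add: gap_factor_def)
qed

lemma gap_factor_right_bounds:
  assumes "a \<le> m" "m \<le> b" "0 < \<eta>" "b + \<eta> \<le> z"
  shows "(b - z) / (a - z) \<le> gap_factor a b m z" and "gap_factor a b m z \<le> (a - z) / (b - z)"
    and "(a - z) / (b - z) \<le> 1 + (b - a) / \<eta>"
proof -
  have zm: "z - b \<le> z - m" "z - m \<le> z - a" "0 < z - b" using assms by auto
  have P: "gap_factor a b m z = ((z - a) * (z - b)) / (z - m)\<^sup>2"
    by (simp add: gap_factor_def power2_commute algebra_simps)
  have "((z - a) * (z - b)) / (z - a)\<^sup>2 \<le> ((z - a) * (z - b)) / (z - m)\<^sup>2"
    using zm by (intro divide_left_mono power_mono) auto
  moreover have "((z - a) * (z - b)) / (z - a)\<^sup>2 = (b - z) / (a - z)"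
    using zm by (simp add: power2_eq_square divide_simps) (simp add: algebra_simps)
  ultimately show "(b - z) / (a - z) \<le> gap_factor a b m z" unfolding P by simp
  have "((z - a) * (z - b)) / (z - m)\<^sup>2 \<le> ((z - a) * (z - b)) / (z - b)\<^sup>2"
    using zm by (intro divide_left_mono power_mono) auto
  moreover have "((z - a) * (z - b)) / (z - b)\<^sup>2 = (a - z) / (b - z)"
    using zm by (simp add: power2_eq_square divide_simps) (simp add: algebra_simps)
  ultimately show "gap_factor a b m z \<le> (a - z) / (b - z)" unfolding P by simp
  have "(a - z) / (b - z) = 1 + (b - a) / (z - b)" using zm by (simp add: field_simps)
  also have "\<dots> \<le> 1 + (b - a) / \<eta>" using assms zm by (intro add_left_mono divide_left_mono) auto
  finally show "(a - z) / (b - z) \<le> 1 + (b - a) / \<eta>" .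
qed

lemma gap_factor_right_pos_abs_ln_le:
  assumes "a \<le> m" "m \<le> b" "0 < \<eta>" "b + \<eta> \<le> z"
  shows "0 < gap_factor a b m z" and "\<bar>ln (gap_factor a b m z)\<bar> \<le> (b - a) / \<eta>"
proof -
  note bounds = gap_factor_right_bounds[OF assms]
  have pos: "0 < (b - z) / (a - z)" "0 < (a - z) / (b - z)"
    using assms by (auto intro: divide_neg_neg)
  show "0 < gap_factor a b m z" using bounds(1) pos by linarith
  have "ln ((a - z) / (b - z)) \<le> (b - a) / \<eta>"
    using ln_le_minus_one[OF pos(2)] bounds(3) by linarith
  moreover have "ln ((a - z) / (b - z)) = - ln ((b - z) / (a - z))"
    using pos by (simp add: ln_div)
  moreover have "ln ((b - z) / (a - z)) \<le> ln (gap_factor a b m z)"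
    "ln (gap_factor a b m z) \<le> ln ((a - z) / (b - z))"
    using bounds pos by simp_all
  ultimately show "\<bar>ln (gap_factor a b m z)\<bar> \<le> (b - a) / \<eta>" by linarith
qed

lemma abs_ln_diff_le:
  fixes x y \<eta> :: real
  assumes "\<eta> \<le> x" "\<eta> \<le> y" "0 < \<eta>"
  shows "\<bar>ln x - ln y\<bar> \<le> \<bar>x - y\<bar> / \<eta>"
proof -
  have *: "ln u - ln v \<le> \<bar>u - v\<bar> / \<eta>" if "\<eta> \<le> u" "\<eta> \<le> v" for u v :: real
  proof -
    have "ln u - ln v = ln (u / v)" using that assms by (simp add: ln_div)
    also have "\<dots> \<le> u / v - 1" using that assms by (intro ln_le_minus_one) auto
    also have "\<dots> = (u - v) / v" using that assms by (simp add: field_simps)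
    also have "\<dots> \<le> \<bar>u - v\<bar> / \<eta>"
      using that assms by (intro frac_le) auto
    finally show ?thesis .
  qed
  show ?thesis using *[of x y] *[of y x] assms by (auto simp: abs_minus_commute)
qed

lemma abs_ln_gap_factor_deriv_le:
  fixes a b m t \<eta> :: real
  assumes "a \<le> m" "m \<le> b" "0 < \<eta>" "b + \<eta> \<le> t"
  shows "\<bar>1 / (t - a) + 1 / (t - b) - 2 / (t - m)\<bar> \<le> (b - a) / \<eta>\<^sup>2"
proof -
  have "0 < t - b" "0 < t - a" using assms by auto
  hence "1 / (t - b) - 1 / (t - a) = (b - a) / ((t - b) * (t - a))"
    by (simp add: field_simps)
  also have "\<dots> \<le> (b - a) / (\<eta> * \<eta>)"
    using assms by (intro divide_left_mono mult_mono) auto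
  finally have "1 / (t - b) - 1 / (t - a) \<le> (b - a) / \<eta>\<^sup>2" by (simp add: power2_eq_square)
  moreover have "1 / (t - a) \<le> 1 / (t - m)" "1 / (t - m) \<le> 1 / (t - b)"
    using assms by (auto intro!: divide_left_mono)
  ultimately show ?thesis by (simp add: abs_le_iff)
qed

lemma ln_gap_factor_right_lipschitz:
  assumes "a \<le> m" "m \<le> b" "a \<le> m'" "m' \<le> b" "0 < \<eta>" "b + \<eta> \<le> z" "b + \<eta> \<le> z'"
  shows "\<bar>ln (gap_factor a b m z) - ln (gap_factor a b m' z')\<bar>
           \<le> (b - a) / \<eta>\<^sup>2 * \<bar>z - z'\<bar> + 2 * \<bar>m - m'\<bar> / \<eta>"
proof -
  define \<phi> where "\<phi> m t = ln (t - a) + ln (t - b) - 2 * ln (t - m)" for m t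
  have ln_eq: "ln (gap_factor a b m z) = \<phi> m z" if "m \<le> b" "b + \<eta> \<le> z" for m z
  proof -
    have "0 < z - a" "0 < z - b" "0 < z - m" using that assms by auto
    moreover have "gap_factor a b m z = ((z - a) * (z - b)) / (z - m)\<^sup>2"
      by (simp add: gap_factor_def power2_commute algebra_simps)
    ultimately show ?thesis by (simp add: \<phi>_def ln_div ln_mult ln_realpow)
  qed
  have mvt: "\<bar>\<phi> m z2 - \<phi> m z1\<bar> \<le> (b - a) / \<eta>\<^sup>2 * (z2 - z1)"
    if z12: "b + \<eta> \<le> z1" "z1 < z2" for z1 z2
  proof -
    have "\<exists>\<xi>. z1 < \<xi> \<and> \<xi> < z2 \<and>
        \<phi> m z2 - \<phi> m z1 = (z2 - z1) * (1 / (\<xi> - a) + 1 / (\<xi> - b) - 2 / (\<xi> - m))"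
    proof (rule MVT2[OF z12(2)])
      fix x assume "z1 \<le> x" "x \<le> z2"
      hence "0 < x - a" "0 < x - b" "0 < x - m" using z12 assms by auto
      thus "(\<phi> m has_real_derivative (1 / (x - a) + 1 / (x - b) - 2 / (x - m))) (at x)"
        unfolding \<phi>_def by (auto intro!: derivative_eq_intros simp: field_simps)
    qed
    then obtain \<xi> where \<xi>: "z1 < \<xi>" "\<xi> < z2"
      "\<phi> m z2 - \<phi> m z1 = (z2 - z1) * (1 / (\<xi> - a) + 1 / (\<xi> - b) - 2 / (\<xi> - m))"
      by blast
    have "\<bar>\<phi> m z2 - \<phi> m z1\<bar> = (z2 - z1) * \<bar>1 / (\<xi> - a) + 1 / (\<xi> - b) - 2 / (\<xi> - m)\<bar>"
      using \<xi> by (simp add: abs_mult)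
    also have "\<dots> \<le> (z2 - z1) * ((b - a) / \<eta>\<^sup>2)"
      using \<xi> z12 assms by (intro mult_left_mono abs_ln_gap_factor_deriv_le) auto
    finally show ?thesis by (simp add: mult.commute)
  qed
  have move_z: "\<bar>\<phi> m z - \<phi> m z'\<bar> \<le> (b - a) / \<eta>\<^sup>2 * \<bar>z - z'\<bar>"
    using mvt[of z z'] mvt[of z' z] assms by (cases z z' rule: linorder_cases) (auto simp: abs_minus_commute)
  have "\<bar>ln (z' - m) - ln (z' - m')\<bar> \<le> \<bar>(z' - m) - (z' - m')\<bar> / \<eta>"
    using assms by (intro abs_ln_diff_le) auto
  hence move_m: "\<bar>\<phi> m z' - \<phi> m' z'\<bar> \<le> 2 * \<bar>m - m'\<bar> / \<eta>"
    by (simp add: \<phi>_def abs_minus_commute)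
  show ?thesis
    using ln_eq[of m z] ln_eq[of m' z'] move_z move_m assms by linarith
qed

lemma gap_factor_separated:
  assumes "a \<le> m" "m \<le> b" "0 < \<eta>" "b + \<eta> \<le> z \<or> z + \<eta> \<le> a"
  shows "0 < gap_factor a b m z" and "\<bar>ln (gap_factor a b m z)\<bar> \<le> (b - a) / \<eta>"
proof -
  have "0 < gap_factor a b m z \<and> \<bar>ln (gap_factor a b m z)\<bar> \<le> (b - a) / \<eta>"
  proof (cases "b + \<eta> \<le> z")
    case True
    thus ?thesis using gap_factor_right_pos_abs_ln_le[OF assms(1-3)] by simp
  next
    case False
    hence "-a + \<eta> \<le> -z" using assms(4) by linarith
    thus ?thesis using gap_factor_right_pos_abs_ln_le[of "-b" "-m" "-a" \<eta> "-z"] assms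
      by (simp add: gap_factor_reflect)
  qed
  thus "0 < gap_factor a b m z" "\<bar>ln (gap_factor a b m z)\<bar> \<le> (b - a) / \<eta>" by auto
qed

lemma gap_factor_le_ratio:
  assumes "a \<le> m" "m \<le> b" "0 < \<eta>"
  shows "b + \<eta> \<le> z \<Longrightarrow> gap_factor a b m z \<le> (a - z) / (b - z)"
    and "z + \<eta> \<le> a \<Longrightarrow> gap_factor a b m z \<le> (b - z) / (a - z)"
proof -
  show "b + \<eta> \<le> z \<Longrightarrow> gap_factor a b m z \<le> (a - z) / (b - z)"
    using gap_factor_right_bounds(2)[OF assms] .
  assume "z + \<eta> \<le> a"
  hence "gap_factor (-b) (-a) (-m) (-z) \<le> (-b - -z) / (-a - -z)"
    using assms by (intro gap_factor_right_bounds(2)[where \<eta> = \<eta>]) auto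
  moreover have "(-b - -z) / (-a - -z) = (b - z) / (a - z)"
    using minus_divide_divide[of "b - z" "a - z"] by simp
  ultimately show "gap_factor a b m z \<le> (b - z) / (a - z)"
    by (simp add: gap_factor_reflect)
qed

lemma ln_gap_factor_lipschitz:
  assumes "a \<le> m" "m \<le> b" "a \<le> m'" "m' \<le> b" "0 < \<eta>"
    and "(b + \<eta> \<le> z \<and> b + \<eta> \<le> z') \<or> (z + \<eta> \<le> a \<and> z' + \<eta> \<le> a)"
  shows "\<bar>ln (gap_factor a b m z) - ln (gap_factor a b m' z')\<bar>
           \<le> (b - a) / \<eta>\<^sup>2 * \<bar>z - z'\<bar> + 2 * \<bar>m - m'\<bar> / \<eta>"
  using assms(6)
proof
  assume "b + \<eta> \<le> z \<and> b + \<eta> \<le> z'"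
  thus ?thesis using ln_gap_factor_right_lipschitz[OF assms(1-5)] by simp
next
  assume "z + \<eta> \<le> a \<and> z' + \<eta> \<le> a"
  hence "\<bar>ln (gap_factor (-b) (-a) (-m) (-z)) - ln (gap_factor (-b) (-a) (-m') (-z'))\<bar>
      \<le> (-a - -b) / \<eta>\<^sup>2 * \<bar>-z - -z'\<bar> + 2 * \<bar>-m - -m'\<bar> / \<eta>"
    using assms by (intro ln_gap_factor_right_lipschitz) auto
  thus ?thesis by (simp add: gap_factor_reflect abs_minus_commute)
qed

lemma summable_on_real_bound:
  fixes f h :: "'a \<Rightarrow> real"
  assumes "h summable_on A" "\<And>x. x \<in> A \<Longrightarrow> \<bar>f x\<bar> \<le> h x"
  shows "f summable_on A"
proof -
  have "(\<lambda>x. norm (f x)) summable_on A"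
    by (rule summable_on_comparison_test[OF assms(1)]) (use assms(2) in auto)
  thus ?thesis by (rule abs_summable_summable)
qed

lemma abs_infsum_diff_le:
  fixes f g h :: "'a \<Rightarrow> real"
  assumes "f summable_on A" "g summable_on A" "h summable_on A"
    and "\<And>x. x \<in> A \<Longrightarrow> \<bar>f x - g x\<bar> \<le> h x"
  shows "\<bar>infsum f A - infsum g A\<bar> \<le> infsum h A"
proof -
  have "((\<lambda>x. - g x) has_sum - infsum g A) A"
    using has_sum_uminus assms(2) by fastforce
  from has_sum_add[OF has_sum_infsum[OF assms(1)] this]
  have "((\<lambda>x. f x - g x) has_sum (infsum f A - infsum g A)) A" by simp
  from norm_infsum_le[OF this has_sum_infsum[OF assms(3)]] assms(4) show ?thesis by simp
qed

lemma prodinf_exp_has_sum: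
  fixes f :: "nat \<Rightarrow> real"
  assumes "(f has_sum s) A"
  shows "(\<Prod>k. if k \<in> A then exp (f k) else 1) = exp s"
proof -
  define g where "g k = (if k \<in> A then f k else 0)" for k
  have "(g has_sum s) UNIV \<longleftrightarrow> (f has_sum s) A"
    by (rule has_sum_cong_neutral) (auto simp: g_def)
  with assms have "(g has_sum s) UNIV" by simp
  hence "g sums s" by (rule has_sum_imp_sums)
  hence "(\<Prod>k. exp (g k)) = exp s" by (metis prodinf_exp sums_summable sums_unique)
  moreover have "(\<lambda>k. exp (g k)) = (\<lambda>k. if k \<in> A then exp (f k) else 1)"
    by (auto simp: g_def)
  ultimately show ?thesis by simp
qed

lemma abs_exp_diff_le:
  fixes x y c :: real
  assumes "exp x \<le> c" "exp y \<le> c"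
  shows "\<bar>exp x - exp y\<bar> \<le> c * \<bar>x - y\<bar>"
proof -
  have *: "exp u - exp v \<le> c * (u - v)" if "v \<le> u" "exp u \<le> c" for u v :: real
  proof -
    have "1 - exp (v - u) \<le> u - v" using exp_ge_add_one_self[of "v - u"] by linarith
    hence "exp u * (1 - exp (v - u)) \<le> exp u * (u - v)" by (intro mult_left_mono) auto
    also have "\<dots> \<le> c * (u - v)" using that by (intro mult_right_mono) auto
    finally show ?thesis by (simp add: algebra_simps exp_diff)
  qed
  show ?thesis
    using *[of y x] *[of x y] assms by (cases "y \<le> x") (auto simp: abs_minus_commute)
qed

lemma abs_mult_diff_le:
  fixes x y x' y' A D :: real
  assumes "\<bar>x\<bar> \<le> A" "\<bar>y'\<bar> \<le> A" "\<bar>x - x'\<bar> \<le> D" "\<bar>y - y'\<bar> \<le> D"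
  shows "\<bar>x * y - x' * y'\<bar> \<le> 2 * A * D"
proof -
  have "x * y - x' * y' = x * (y - y') + (x - x') * y'" by (simp add: algebra_simps)
  hence "\<bar>x * y - x' * y'\<bar> \<le> \<bar>x\<bar> * \<bar>y - y'\<bar> + \<bar>x - x'\<bar> * \<bar>y'\<bar>"
    by (metis abs_mult abs_triangle_ineq)
  also have "\<dots> \<le> A * D + D * A" using assms by (intro add_mono mult_mono) auto
  finally show ?thesis by simp
qed

lemma abs_xi_poly_le:
  fixes p q z K E :: real
  assumes "\<bar>p\<bar> \<le> K * E" "\<bar>q\<bar> \<le> K * E" "\<bar>z\<bar> \<le> K * E" "0 \<le> K" "1 \<le> E"
  shows "\<bar>p / 4 + q\<^sup>2 / 8 - z * q / 2 + z\<^sup>2\<bar> \<le> (K + 2 * K\<^sup>2) * E\<^sup>2"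
proof -
  have sq: "u\<^sup>2 \<le> K\<^sup>2 * E\<^sup>2" if "\<bar>u\<bar> \<le> K * E" for u :: real
    using power_mono[OF that, of 2] by (simp add: power_mult_distrib)
  have "\<bar>z * q\<bar> \<le> (K * E) * (K * E)"
    unfolding abs_mult using assms by (intro mult_mono) auto
  hence zq: "\<bar>z * q\<bar> \<le> K\<^sup>2 * E\<^sup>2" by (simp add: power2_eq_square mult_ac)
  have "K * E \<le> K * E\<^sup>2"
    using assms by (intro mult_left_mono) (auto simp: power2_eq_square)
  moreover have "(K + 2 * K\<^sup>2) * E\<^sup>2 = K * E\<^sup>2 + 2 * (K\<^sup>2 * E\<^sup>2)"
    by (simp add: algebra_simps)
  ultimately show ?thesis
    using abs_le_D1[OF assms(1)] abs_le_D2[OF assms(1)] abs_le_D1[OF zq] abs_le_D2[OF zq]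
      sq[OF assms(2)] sq[OF assms(3)] zero_le_power2[of q] zero_le_power2[of z]
    by (intro abs_leI) linarith+
qed

lemma abs_xi_poly_diff_le:
  fixes p q z p' q' z' K E N :: real
  assumes "\<bar>q\<bar> \<le> K * E" "\<bar>z\<bar> \<le> K * E" "\<bar>q'\<bar> \<le> K * E" "\<bar>z'\<bar> \<le> K * E"
    and "\<bar>p - p'\<bar> \<le> K * N" "\<bar>q - q'\<bar> \<le> K * N" "\<bar>z - z'\<bar> \<le> K * N"
    and "0 \<le> K" "1 \<le> E" "0 \<le> N"
  shows "\<bar>(p / 4 + q\<^sup>2 / 8 - z * q / 2 + z\<^sup>2) - (p' / 4 + q'\<^sup>2 / 8 - z' * q' / 2 + z'\<^sup>2)\<bar>
           \<le> (K + 4 * K\<^sup>2) * E * N"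
proof -
  have KKEN: "2 * (K * E) * (K * N) = 2 * (K\<^sup>2 * E * N)" by (simp add: power2_eq_square mult_ac)
  have qq: "\<bar>q * q - q' * q'\<bar> \<le> 2 * (K\<^sup>2 * E * N)"
    using abs_mult_diff_le[of q "K * E" q' q' "K * N" q] assms by (simp add: KKEN)
  have zq: "\<bar>z * q - z' * q'\<bar> \<le> 2 * (K\<^sup>2 * E * N)"
    using abs_mult_diff_le[of z "K * E" q' z' "K * N" q] assms by (simp add: KKEN)
  have zz: "\<bar>z * z - z' * z'\<bar> \<le> 2 * (K\<^sup>2 * E * N)"
    using abs_mult_diff_le[of z "K * E" z' z' "K * N" z] assms by (simp add: KKEN)
  have "0 \<le> K * N" "K * N \<le> K * E * N" "0 \<le> K\<^sup>2 * E * N"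
    using assms mult_left_mono[of 1 E "K * N"] by (simp_all add: mult_ac)
  moreover have expand: "(p / 4 + q\<^sup>2 / 8 - z * q / 2 + z\<^sup>2) - (p' / 4 + q'\<^sup>2 / 8 - z' * q' / 2 + z'\<^sup>2)
      = (p - p') / 4 + (q * q - q' * q') / 8 - (z * q - z' * q') / 2 + (z * z - z' * z')"
    by (simp add: power2_eq_square field_simps)
  moreover have "(K + 4 * K\<^sup>2) * E * N = K * E * N + 4 * (K\<^sup>2 * E * N)"
    by (simp add: algebra_simps)
  ultimately show ?thesis
    using abs_le_D1[OF assms(5)] abs_le_D2[OF assms(5)] abs_le_D1[OF qq] abs_le_D2[OF qq]
      abs_le_D1[OF zq] abs_le_D2[OF zq] abs_le_D1[OF zz] abs_le_D2[OF zz]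
    unfolding expand by (intro abs_leI) argo+
qed

lemma eta_nonneg: "0 \<le> eta a b j k"
  by (simp add: eta_def)

lemma eta_sym: "eta a b j k = eta a b k j"
  by (simp add: eta_def setdist_sym)

locale craig_gaps =
  fixes a b :: "nat \<Rightarrow> real" and J :: "nat set" and \<delta> :: real
  assumes zero_in_J: "0 \<in> J"
    and gap_nonempty: "\<forall>j\<in>J. a j < b j"
    and delta_pos: "\<delta> > 0"
    and Cc_finite: "\<forall>k\<in>J. Cc a b J k < \<infinity>"
    and craig_summable:
      "(\<lambda>k. (1 + eta a b k 0) * real_of_ereal (Cc a b J k) * sqrt (gam a b k)) summable_on J"
    and craig_interaction: "\<exists>M. \<forall>j\<in>J.
           (\<lambda>k. (real_of_ereal (Cc a b J j))^3 * (real_of_ereal (Cc a b J k))\<^sup>2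
                 * (1 + (eta a b 0 j)\<^sup>2) * sqrt (gam a b j) * sqrt (gam a b k) / eta a b j k)
             summable_on (J - {j}) \<and>
           (\<Sum>\<^sub>\<infinity>k\<in>J - {j}. (real_of_ereal (Cc a b J j))^3 * (real_of_ereal (Cc a b J k))\<^sup>2
                 * (1 + (eta a b 0 j)\<^sup>2) * sqrt (gam a b j) * sqrt (gam a b k) / eta a b j k) \<le> M"
    and craig_separation: "\<exists>M. \<forall>j\<in>J. \<forall>k\<in>J. k \<noteq> j \<longrightarrow>
           sqrt (gam a b j) * sqrt (gam a b k) \<le> M * (gam a b j powr \<delta> * eta a b j k)"
begin

abbreviation sg :: "nat \<Rightarrow> real" where "sg k \<equiv> sqrt (gam a b k)"

abbreviation C :: "nat \<Rightarrow> real" where "C k \<equiv> real_of_ereal (Cc a b J k)"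

abbreviation eta0 :: "nat \<Rightarrow> real" where "eta0 k \<equiv> eta a b k 0"

abbreviation sep :: "nat \<Rightarrow> nat \<Rightarrow> real" where "sep j k \<equiv> sg j * sg k / eta a b j k"

definition T :: real where "T = (\<Sum>\<^sub>\<infinity>k\<in>J. (1 + eta0 k) * C k * sg k)"

text \<open>\<open>R (1 + \<eta>\<^sub>j\<^sub>0)\<close> bounds the closed gap \<open>j\<close> (lemma \<open>abs_le_R\<close>), and \<open>K\<close> is a
  common bound for \<open>|Q\<^sub>1|\<close>, \<open>|Q\<^sub>2|\<close>, \<open>|\<mu>\<^sub>j|/(1 + \<eta>\<^sub>j\<^sub>0)\<close> and their Lipschitz constants.\<close>

definition R :: real where "R = 1 + \<bar>a 0\<bar> + gam a b 0 + T\<^sup>2"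

definition K :: real where "K = 4 * R\<^sup>2"

lemma gam_pos: "k \<in> J \<Longrightarrow> 0 < gam a b k"
  using gap_nonempty by (simp add: gam_def)

lemma sg_pos: "k \<in> J \<Longrightarrow> 0 < sg k"
  using gam_pos by simp

lemma sg_mult_self: "k \<in> J \<Longrightarrow> sg k * sg k = gam a b k"
  using gam_pos[of k] by simp

lemma Cc_ge_sqrt_prod:
  assumes "j \<in> J" "z \<in> {a j<..<b j}" "finite F" "F \<subseteq> J - {j}"
  shows "ereal (sqrt (\<Prod>k\<in>F. Cfac a b j k z)) \<le> Cc a b J j"
  unfolding Cc_def by (rule SUP_upper2[OF assms(2)], rule SUP_upper2[of F]) (use assms in auto)

lemma Cc_eq_C: "k \<in> J \<Longrightarrow> Cc a b J k = ereal (C k)"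
  and C_ge_1: "k \<in> J \<Longrightarrow> 1 \<le> C k"
proof -
  assume k: "k \<in> J"
  hence "(a k + b k) / 2 \<in> {a k<..<b k}" using gap_nonempty by auto
  from Cc_ge_sqrt_prod[OF k this, of "{}"] have "1 \<le> Cc a b J k" by (simp add: one_ereal_def)
  with Cc_finite k show "Cc a b J k = ereal (C k)" "1 \<le> C k"
    by (cases "Cc a b J k"; simp)+
qed

lemma weight_nonneg: "k \<in> J \<Longrightarrow> 0 \<le> (1 + eta0 k) * sg k"
  using eta_nonneg[of a b k 0] sg_pos[of k] by simp

lemma weight_le_craig_term: "k \<in> J \<Longrightarrow> (1 + eta0 k) * sg k \<le> (1 + eta0 k) * C k * sg k"
  using C_ge_1[of k] eta_nonneg[of a b k 0] sg_pos[of k]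
  by (simp add: mult_le_cancel_left1 mult.assoc mult_left_mono)

lemma craig_term_le_T: "k \<in> J \<Longrightarrow> (1 + eta0 k) * C k * sg k \<le> T"
proof -
  assume k: "k \<in> J"
  have nonneg: "0 \<le> (1 + eta0 i) * C i * sg i" if "i \<in> J" for i
    using weight_le_craig_term[OF that] weight_nonneg[OF that] by linarith
  have "(\<Sum>\<^sub>\<infinity>i\<in>{k}. (1 + eta0 i) * C i * sg i) \<le> T"
    unfolding T_def by (rule infsum_mono_neutral) (use k craig_summable nonneg in auto)
  thus ?thesis by simp
qed

lemma T_nonneg: "0 \<le> T"
  using craig_term_le_T weight_le_craig_term weight_nonneg zero_in_J by (meson order_trans)

lemma sg_le_weight: "k \<in> J \<Longrightarrow> sg k \<le> (1 + eta0 k) * sg k"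
  using eta_nonneg[of a b k 0] sg_pos[of k] by (simp add: distrib_right)

lemma sg_le_T: "k \<in> J \<Longrightarrow> sg k \<le> T"
  using sg_le_weight weight_le_craig_term craig_term_le_T by (meson order_trans)

lemma gam_le_T_sg: "k \<in> J \<Longrightarrow> gam a b k \<le> T * sg k"
  using mult_right_mono[OF sg_le_T, of k "sg k"] sg_pos[of k] sg_mult_self[of k] by simp

lemma gam_le_T_sq: "k \<in> J \<Longrightarrow> gam a b k \<le> T\<^sup>2"
  using gam_le_T_sg[of k] mult_left_mono[OF sg_le_T T_nonneg, of k] by (simp add: power2_eq_square)

lemma weight_summable: "(\<lambda>k. (1 + eta0 k) * sg k) summable_on J"
  and weight_infsum_le: "(\<Sum>\<^sub>\<infinity>k\<in>J. (1 + eta0 k) * sg k) \<le> T"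
proof -
  show summable: "(\<lambda>k. (1 + eta0 k) * sg k) summable_on J"
    by (rule summable_on_comparison_test[OF craig_summable weight_le_craig_term weight_nonneg])
  show "(\<Sum>\<^sub>\<infinity>k\<in>J. (1 + eta0 k) * sg k) \<le> T"
    unfolding T_def by (rule infsum_mono[OF summable craig_summable weight_le_craig_term])
qed

lemma weighted_bound:
  assumes "0 \<le> c" "\<And>k. k \<in> J \<Longrightarrow> \<bar>f k\<bar> \<le> c * ((1 + eta0 k) * sg k)"
  shows "f summable_on J" and "\<bar>infsum f J\<bar> \<le> c * T"
proof -
  have weights: "(\<lambda>k. c * ((1 + eta0 k) * sg k)) summable_on J"
    by (rule summable_on_cmult_right[OF weight_summable])
  show f: "f summable_on J" by (rule summable_on_real_bound[OF weights assms(2)])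
  have "\<bar>infsum f J\<bar> \<le> (\<Sum>\<^sub>\<infinity>k\<in>J. c * ((1 + eta0 k) * sg k))"
    using norm_infsum_le[OF has_sum_infsum[OF f] has_sum_infsum[OF weights]] assms(2) by simp
  also have "\<dots> \<le> c * T"
    using weight_infsum_le assms(1) by (simp add: infsum_cmult_right' mult_left_mono)
  finally show "\<bar>infsum f J\<bar> \<le> c * T" .
qed

lemma weighted_diff_bound:
  assumes "f summable_on J" "g summable_on J" "0 \<le> c"
    and "\<And>k. k \<in> J \<Longrightarrow> \<bar>f k - g k\<bar> \<le> c * ((1 + eta0 k) * sg k)"
  shows "\<bar>infsum f J - infsum g J\<bar> \<le> c * T"
proof -
  have weights: "(\<lambda>k. c * ((1 + eta0 k) * sg k)) summable_on J"
    by (rule summable_on_cmult_right[OF weight_summable])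
  have "\<bar>infsum f J - infsum g J\<bar> \<le> (\<Sum>\<^sub>\<infinity>k\<in>J. c * ((1 + eta0 k) * sg k))"
    by (rule abs_infsum_diff_le[OF assms(1,2) weights assms(4)])
  also have "\<dots> \<le> c * T"
    using weight_infsum_le assms(3) by (simp add: infsum_cmult_right' mult_left_mono)
  finally show ?thesis .
qed

lemma R_bounds: "1 \<le> R" "T \<le> R" "T\<^sup>2 \<le> R" "4 * R \<le> K"
proof -
  have "0 \<le> gam a b 0" using gam_pos[OF zero_in_J] by simp
  moreover have "T \<le> 1 + T\<^sup>2" using zero_le_power2[of "T - 1"] T_nonneg by (simp add: power2_diff)
  ultimately show R: "1 \<le> R" "T \<le> R" "T\<^sup>2 \<le> R" using T_nonneg unfolding R_def by auto
  have "4 * R * 1 \<le> 4 * R * R" using R(1) by (intro mult_left_mono) auto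
  thus "4 * R \<le> K" by (simp add: K_def power2_eq_square mult_ac)
qed

text \<open>Distinct gaps may share an endpoint, so \<open>\<eta>\<^sub>j\<^sub>k > 0\<close> comes from the third Craig
  condition, not from the structure of the gaps.\<close>

lemma eta_pos:
  assumes "j \<in> J" "k \<in> J" "j \<noteq> k"
  shows "0 < eta a b j k"
proof -
  obtain M where "\<forall>j\<in>J. \<forall>k\<in>J. k \<noteq> j \<longrightarrow> sg j * sg k \<le> M * (gam a b j powr \<delta> * eta a b j k)"
    using craig_separation by blast
  hence "sg j * sg k \<le> M * (gam a b j powr \<delta> * eta a b j k)" using assms by auto
  moreover have "0 < sg j * sg k" using sg_pos assms by simp
  ultimately show ?thesis
    using eta_nonneg[of a b j k] by (cases "eta a b j k = 0") auto
qed

lemma eta_le_dist: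
  assumes "j \<in> J" "k \<in> J" "x \<in> {a j..b j}" "w \<in> {a k..b k}"
  shows "eta a b j k \<le> \<bar>x - w\<bar>"
proof -
  have "closure {a j<..<b j} = {a j..b j}" "closure {a k<..<b k} = {a k..b k}"
    using gap_nonempty assms by auto
  hence "eta a b j k = setdist {a j..b j} {a k..b k}"
    by (metis eta_def setdist_closure_1 setdist_closure_2)
  also have "\<dots> \<le> dist x w" by (rule setdist_le_dist) (use assms in auto)
  finally show ?thesis by (simp add: dist_real_def)
qed

lemma gaps_separated:
  assumes "j \<in> J" "k \<in> J" "j \<noteq> k"
  shows "(b k \<le> a j \<and> (\<forall>x\<in>{a j..b j}. b k + eta a b j k \<le> x))
       \<or> (\<not> b k \<le> a j \<and> (\<forall>x\<in>{a j..b j}. x + eta a b j k \<le> a k))"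
proof -
  have ab: "a j < b j" "a k < b k" using gap_nonempty assms by auto
  have "b k < a j \<or> b j < a k"
  proof (rule ccontr)
    assume "\<not> (b k < a j \<or> b j < a k)"
    hence "max (a j) (a k) \<in> {a j..b j}" "max (a j) (a k) \<in> {a k..b k}" using ab by auto
    from eta_le_dist[OF assms(1,2) this] eta_pos[OF assms] show False by simp
  qed
  moreover have "eta a b j k \<le> \<bar>x - b k\<bar>" "eta a b j k \<le> \<bar>x - a k\<bar>" if "x \<in> {a j..b j}" for x
    using eta_le_dist[OF assms(1,2) that] ab by auto
  ultimately show ?thesis using ab by fastforce
qed

lemma abs_le_R:
  assumes "j \<in> J" "x \<in> {a j..b j}"
  shows "\<bar>x\<bar> \<le> R * (1 + eta0 j)"
proof -
  have "\<bar>x - a 0\<bar> \<le> eta0 j + gam a b j + gam a b 0"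
  proof (rule field_le_epsilon)
    fix e :: real assume "0 < e"
    moreover have "{a j<..<b j} \<noteq> {}" "{a 0<..<b 0} \<noteq> {}"
      using gap_nonempty assms zero_in_J by auto
    ultimately obtain x' w where "x' \<in> {a j<..<b j}" "w \<in> {a 0<..<b 0}" "dist x' w < eta0 j + e"
      by (metis eta_def less_add_same_cancel1 setdist_ltE)
    with assms(2) show "\<bar>x - a 0\<bar> \<le> eta0 j + gam a b j + gam a b 0 + e"
      by (auto simp: gam_def dist_real_def)
  qed
  moreover have "gam a b j \<le> T\<^sup>2" by (rule gam_le_T_sq[OF assms(1)])
  moreover have "R \<le> R * (1 + eta0 j) - eta0 j"
    using R_bounds(1) eta_nonneg[of a b j 0] mult_right_mono[of 1 R "eta0 j"]
    by (simp add: algebra_simps)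
  ultimately show ?thesis unfolding R_def by linarith
qed

lemma mu_mem: "k \<in> J \<Longrightarrow> mu a b y k \<in> {a k..b k}"
proof -
  assume "k \<in> J"
  moreover have "(sin (y k))\<^sup>2 \<le> 1" by (simp add: abs_square_le_1)
  ultimately have "0 \<le> gam a b k * (sin (y k))\<^sup>2" "gam a b k * (sin (y k))\<^sup>2 \<le> gam a b k"
    using gam_pos[of k] mult_left_le by auto
  thus ?thesis by (simp add: mu_def gam_def)
qed

lemma ynorm_bdd: "bdd_above ((\<lambda>j. sg j * cdist (y j - y' j)) ` J)"
proof (rule bdd_aboveI2)
  fix j assume "j \<in> J"
  thus "sg j * cdist (y j - y' j) \<le> T * (pi / 2)"
    using sg_le_T cdist_le_pi_half cdist_nonneg T_nonneg by (intro mult_mono) auto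
qed

lemma sg_cdist_le_ynorm: "k \<in> J \<Longrightarrow> sg k * cdist (y k - y' k) \<le> ynorm a b J y y'"
  unfolding ynorm_def by (rule cSUP_upper[OF _ ynorm_bdd])

lemma ynorm_nonneg: "0 \<le> ynorm a b J y y'"
  using sg_cdist_le_ynorm[OF zero_in_J] sg_pos[OF zero_in_J] cdist_nonneg
  by (meson order_trans zero_le_mult_iff less_imp_le)

lemma mu_lipschitz: "k \<in> J \<Longrightarrow> \<bar>mu a b y k - mu a b y' k\<bar> \<le> sg k * ynorm a b J y y'"
proof -
  assume k: "k \<in> J"
  have "\<bar>mu a b y k - mu a b y' k\<bar> = gam a b k * \<bar>(sin (y k))\<^sup>2 - (sin (y' k))\<^sup>2\<bar>"
    using gam_pos[OF k] by (simp add: mu_def abs_mult right_diff_distrib[symmetric])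
  also have "\<dots> \<le> sg k * (sg k * cdist (y k - y' k))"
    using gam_pos[OF k] abs_sin_sq_diff_le_cdist sg_mult_self[OF k]
    by (metis less_imp_le mult.assoc mult_left_mono)
  also have "\<dots> \<le> sg k * ynorm a b J y y'"
    using sg_cdist_le_ynorm[OF k] sg_pos[OF k] by (intro mult_left_mono) auto
  finally show ?thesis .
qed

lemma sep_nonneg: "j \<in> J \<Longrightarrow> k \<in> J \<Longrightarrow> 0 \<le> sep j k"
  using sg_pos eta_nonneg[of a b j k] by (simp add: less_imp_le)

lemma sep_bounded:
  obtains M where "0 \<le> M" "\<And>j k. j \<in> J \<Longrightarrow> k \<in> J \<Longrightarrow> k \<noteq> j \<Longrightarrow> sep j k \<le> M"
proof -
  obtain M where M: "\<forall>j\<in>J. \<forall>k\<in>J. k \<noteq> j \<longrightarrow> sg j * sg k \<le> M * (gam a b j powr \<delta> * eta a b j k)"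
    using craig_separation by blast
  have "sep j k \<le> \<bar>M\<bar> * (T\<^sup>2) powr \<delta>" if jk: "j \<in> J" "k \<in> J" "k \<noteq> j" for j k
  proof -
    have "0 < eta a b j k" using eta_pos jk by auto
    moreover have "sg j * sg k \<le> M * (gam a b j powr \<delta> * eta a b j k)" using M jk by auto
    ultimately have "sep j k \<le> M * gam a b j powr \<delta>" by (simp add: divide_le_eq mult.assoc)
    also have "\<dots> \<le> \<bar>M\<bar> * gam a b j powr \<delta>" by (intro mult_right_mono) auto
    also have "\<dots> \<le> \<bar>M\<bar> * (T\<^sup>2) powr \<delta>"
      using gam_le_T_sq[OF jk(1)] gam_pos[OF jk(1)] delta_pos by (intro mult_left_mono powr_mono2) auto
    finally show ?thesis .
  qed
  thus ?thesis using that[of "\<bar>M\<bar> * (T\<^sup>2) powr \<delta>"] by auto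
qed

lemma sep_le_interaction_term:
  assumes "j \<in> J" "k \<in> J"
  shows "sep j k \<le> C j * (1 + (eta0 j)\<^sup>2) * sep j k"
    and "C j * (1 + (eta0 j)\<^sup>2) * sep j k
           \<le> (C j)^3 * (C k)\<^sup>2 * (1 + (eta a b 0 j)\<^sup>2) * sg j * sg k / eta a b j k"
proof -
  have C: "1 \<le> C j" "1 \<le> C k" using C_ge_1 assms by auto
  have sep: "0 \<le> sep j k" using sep_nonneg assms by simp
  have "1 * 1 \<le> C j * (1 + (eta0 j)\<^sup>2)" using C by (intro mult_mono) auto
  thus "sep j k \<le> C j * (1 + (eta0 j)\<^sup>2) * sep j k" using mult_right_mono[OF _ sep] by fastforce
  have "C j * 1 \<le> (C j)^3 * (C k)\<^sup>2"
    using C power_increasing[of 1 3 "C j"] one_le_power[of "C k" 2] by (intro mult_mono) auto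
  hence "C j * (1 + (eta0 j)\<^sup>2) * sep j k \<le> (C j)^3 * (C k)\<^sup>2 * (1 + (eta0 j)\<^sup>2) * sep j k"
    using sep by (intro mult_right_mono) auto
  thus "C j * (1 + (eta0 j)\<^sup>2) * sep j k
      \<le> (C j)^3 * (C k)\<^sup>2 * (1 + (eta a b 0 j)\<^sup>2) * sg j * sg k / eta a b j k"
    by (simp add: eta_sym[of a b 0 j] mult.assoc)
qed

lemma sep_summable: "j \<in> J \<Longrightarrow> sep j summable_on (J - {j})"
proof -
  assume j: "j \<in> J"
  then obtain M where "(\<lambda>k. (C j)^3 * (C k)\<^sup>2 * (1 + (eta a b 0 j)\<^sup>2) * sg j * sg k / eta a b j k)
      summable_on (J - {j})"
    using craig_interaction by blast
  thus ?thesis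
  proof (rule summable_on_comparison_test)
    fix k assume "k \<in> J - {j}"
    thus "0 \<le> sep j k" using j sep_nonneg by simp
    show "sep j k \<le> (C j)^3 * (C k)\<^sup>2 * (1 + (eta a b 0 j)\<^sup>2) * sg j * sg k / eta a b j k"
      using order_trans[OF sep_le_interaction_term[OF j]] \<open>k \<in> J - {j}\<close> by simp
  qed
qed

lemma sep_interaction_bounded:
  obtains M where "\<And>j. j \<in> J \<Longrightarrow> C j * (1 + (eta0 j)\<^sup>2) * (\<Sum>\<^sub>\<infinity>k\<in>J - {j}. sep j k) \<le> M"
proof -
  obtain M where M: "\<forall>j\<in>J.
      (\<lambda>k. (C j)^3 * (C k)\<^sup>2 * (1 + (eta a b 0 j)\<^sup>2) * sg j * sg k / eta a b j k) summable_on (J - {j}) \<and>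
      (\<Sum>\<^sub>\<infinity>k\<in>J - {j}. (C j)^3 * (C k)\<^sup>2 * (1 + (eta a b 0 j)\<^sup>2) * sg j * sg k / eta a b j k) \<le> M"
    using craig_interaction by blast
  have "C j * (1 + (eta0 j)\<^sup>2) * (\<Sum>\<^sub>\<infinity>k\<in>J - {j}. sep j k) \<le> M" if j: "j \<in> J" for j
  proof -
    have "C j * (1 + (eta0 j)\<^sup>2) * (\<Sum>\<^sub>\<infinity>k\<in>J - {j}. sep j k)
        = (\<Sum>\<^sub>\<infinity>k\<in>J - {j}. C j * (1 + (eta0 j)\<^sup>2) * sep j k)"
      by (rule infsum_cmult_right'[symmetric])
    also have "\<dots> \<le> (\<Sum>\<^sub>\<infinity>k\<in>J - {j}. (C j)^3 * (C k)\<^sup>2 * (1 + (eta a b 0 j)\<^sup>2) * sg j * sg k / eta a b j k)"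
      using M j sep_le_interaction_term(2)[OF j]
      by (intro infsum_mono summable_on_cmult_right sep_summable) auto
    also have "\<dots> \<le> M" using M j by blast
    finally show ?thesis .
  qed
  thus ?thesis using that by blast
qed

lemma gap_factor_at_mu:
  assumes "j \<in> J" "k \<in> J - {j}"
  shows "0 < gap_factor (a k) (b k) (mu a b y k) (mu a b y j)"
    and "\<bar>ln (gap_factor (a k) (b k) (mu a b y k) (mu a b y j))\<bar> \<le> gam a b k / eta a b j k"
    and "gap_factor (a k) (b k) (mu a b y k) (mu a b y j) \<le> Cfac a b j k (mu a b y j)"
proof -
  have k: "k \<in> J" "j \<noteq> k" using assms by auto
  note m = mu_mem[OF k(1), of y] and z = mu_mem[OF assms(1), of y]
  note \<eta> = eta_pos[OF assms(1) k]
  have side: "(b k \<le> a j \<and> b k + eta a b j k \<le> mu a b y j) \<or>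
      (\<not> b k \<le> a j \<and> mu a b y j + eta a b j k \<le> a k)"
    using gaps_separated[OF assms(1) k] z by blast
  show "0 < gap_factor (a k) (b k) (mu a b y k) (mu a b y j)"
    and "\<bar>ln (gap_factor (a k) (b k) (mu a b y k) (mu a b y j))\<bar> \<le> gam a b k / eta a b j k"
    using gap_factor_separated[of "a k" "mu a b y k" "b k" "eta a b j k" "mu a b y j"] m \<eta> side
    by (auto simp: gam_def)
  show "gap_factor (a k) (b k) (mu a b y k) (mu a b y j) \<le> Cfac a b j k (mu a b y j)"
    using gap_factor_le_ratio[of "a k" "mu a b y k" "b k" "eta a b j k" "mu a b y j"] m \<eta> side
    by (auto simp: Cfac_def)
qed

lemma ln_gap_factor_at_mu_lipschitz:
  assumes "j \<in> J" "k \<in> J - {j}"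
  shows "\<bar>ln (gap_factor (a k) (b k) (mu a b y k) (mu a b y j))
           - ln (gap_factor (a k) (b k) (mu a b y' k) (mu a b y' j))\<bar>
         \<le> gam a b k / (eta a b j k)\<^sup>2 * \<bar>mu a b y j - mu a b y' j\<bar>
           + 2 * \<bar>mu a b y k - mu a b y' k\<bar> / eta a b j k"
proof -
  have k: "k \<in> J" "j \<noteq> k" using assms by auto
  have "(b k + eta a b j k \<le> mu a b y j \<and> b k + eta a b j k \<le> mu a b y' j) \<or>
      (mu a b y j + eta a b j k \<le> a k \<and> mu a b y' j + eta a b j k \<le> a k)"
    using gaps_separated[OF assms(1) k] mu_mem[OF assms(1)] by blast
  thus ?thesis
    using ln_gap_factor_lipschitz[of "a k" "mu a b y k" "b k" "mu a b y' k" "eta a b j k"]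
      mu_mem[OF k(1)] eta_pos[OF assms(1) k] by (simp add: gam_def)
qed

text \<open>\<open>C\<^sub>j\<close> is a supremum over the open gap, while \<open>\<mu>\<^sub>j\<close> may be an endpoint; the factors
  are continuous on the closed gap because the other gaps keep their distance.\<close>

lemma sqrt_prod_Cfac_le_C:
  assumes j: "j \<in> J" and z: "z \<in> {a j..b j}" and F: "finite F" "F \<subseteq> J - {j}"
  shows "sqrt (\<Prod>k\<in>F. Cfac a b j k z) \<le> C j"
proof (rule continuous_le_on_closure[where S = "{a j<..<b j}" and x = z
    and f = "\<lambda>z. sqrt (\<Prod>k\<in>F. Cfac a b j k z)"])
  have closure: "closure {a j<..<b j} = {a j..b j}" using gap_nonempty j by auto
  have "continuous_on {a j..b j} (Cfac a b j k)" if "k \<in> F" for k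
  proof -
    have k: "k \<in> J" "j \<noteq> k" using that F by auto
    from gaps_separated[OF j k] eta_pos[OF j k] show ?thesis
      unfolding Cfac_def by (elim disjE) (auto intro!: continuous_intros)
  qed
  thus "continuous_on (closure {a j<..<b j}) (\<lambda>z. sqrt (\<Prod>k\<in>F. Cfac a b j k z))"
    unfolding closure by (intro continuous_intros) auto
  show "z \<in> closure {a j<..<b j}" using closure z by simp
  show "sqrt (\<Prod>k\<in>F. Cfac a b j k x) \<le> C j" if "x \<in> {a j<..<b j}" for x
    using Cc_ge_sqrt_prod[OF j that F] by (subst (asm) Cc_eq_C[OF j]) simp
qed

definition logW :: "(nat \<Rightarrow> real) \<Rightarrow> nat \<Rightarrow> nat \<Rightarrow> real" where
  "logW y j k = ln (gap_factor (a k) (b k) (mu a b y k) (mu a b y j)) / 2"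

lemma abs_logW_le:
  assumes "j \<in> J" "k \<in> J - {j}"
  shows "\<bar>logW y j k\<bar> \<le> T / (2 * sg j) * sep j k"
proof -
  have k: "k \<in> J" "j \<noteq> k" using assms by auto
  have "\<bar>logW y j k\<bar> \<le> gam a b k / eta a b j k / 2"
    using gap_factor_at_mu(2)[OF assms] by (simp add: logW_def)
  also have "\<dots> \<le> T * sg k / eta a b j k / 2"
    using gam_le_T_sg[OF k(1)] eta_pos[OF assms(1) k] by (intro divide_right_mono) auto
  also have "\<dots> = T / (2 * sg j) * sep j k" using sg_pos[OF assms(1)] by (simp add: field_simps)
  finally show ?thesis .
qed

lemma logW_summable:
  assumes "j \<in> J"
  shows "logW y j summable_on (J - {j})"
proof (rule summable_on_real_bound)
  show "(\<lambda>k. T / (2 * sg j) * sep j k) summable_on (J - {j})"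
    by (intro summable_on_cmult_right sep_summable assms)
qed (rule abs_logW_le[OF assms])

lemma W_eq_exp: "j \<in> J \<Longrightarrow> W a b J y j = exp (\<Sum>\<^sub>\<infinity>k\<in>J - {j}. logW y j k)"
proof -
  assume j: "j \<in> J"
  have factor: "sqrt (((a k - mu a b y j) * (b k - mu a b y j)) / (mu a b y k - mu a b y j)\<^sup>2)
      = exp (logW y j k)" if "k \<in> J - {j}" for k
    using gap_factor_at_mu(1)[OF j that, of y]
    by (simp add: logW_def gap_factor_def ln_sqrt[symmetric])
  have "W a b J y j = (\<Prod>k. if k \<in> J - {j} then exp (logW y j k) else 1)"
    unfolding W_def by (intro arg_cong[where f = prodinf] ext) (simp add: factor)
  also have "\<dots> = exp (\<Sum>\<^sub>\<infinity>k\<in>J - {j}. logW y j k)"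
    by (rule prodinf_exp_has_sum[OF has_sum_infsum[OF logW_summable[OF j]]])
  finally show ?thesis .
qed

lemma infsum_logW_le_ln_C: "j \<in> J \<Longrightarrow> (\<Sum>\<^sub>\<infinity>k\<in>J - {j}. logW y j k) \<le> ln (C j)"
proof (rule infsum_le_finite_sums[OF logW_summable])
  fix F assume j: "j \<in> J" and F: "finite F" "F \<subseteq> J - {j}"
  define z where "z = mu a b y j"
  have k: "k \<in> J - {j}" if "k \<in> F" for k using that F by auto
  have Cfac_pos: "0 < Cfac a b j k z" if "k \<in> F" for k
    using gap_factor_at_mu(1,3)[OF j k[OF that], where y = y] by (simp add: z_def)
  have "sum (logW y j) F \<le> (\<Sum>k\<in>F. ln (Cfac a b j k z) / 2)"
  proof (rule sum_mono)
    fix k assume "k \<in> F"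
    thus "logW y j k \<le> ln (Cfac a b j k z) / 2"
      using gap_factor_at_mu(1,3)[OF j k[OF \<open>k \<in> F\<close>], where y = y] Cfac_pos
      by (simp add: logW_def z_def)
  qed
  also have "\<dots> = ln (\<Prod>k\<in>F. Cfac a b j k z) / 2"
  proof -
    have "ln (\<Prod>k\<in>F. Cfac a b j k z) = (\<Sum>k\<in>F. ln (Cfac a b j k z))"
      by (rule ln_prod[OF F(1)]) (use Cfac_pos in force)
    thus ?thesis by (simp add: sum_divide_distrib)
  qed
  also have "\<dots> = ln (sqrt (\<Prod>k\<in>F. Cfac a b j k z))"
    using Cfac_pos by (simp add: ln_sqrt prod_pos less_imp_le)
  also have "\<dots> \<le> ln (C j)"
    using sqrt_prod_Cfac_le_C[OF j mu_mem[OF j] F] Cfac_pos C_ge_1[OF j]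
    by (simp add: z_def prod_pos less_imp_le)
  finally show "sum (logW y j) F \<le> ln (C j)" .
qed

lemma W_pos: "j \<in> J \<Longrightarrow> 0 < W a b J y j"
  by (simp add: W_eq_exp)

lemma W_le_C: "j \<in> J \<Longrightarrow> W a b J y j \<le> C j"
  using infsum_logW_le_ln_C[of j y] C_ge_1[of j] by (simp add: W_eq_exp ln_ge_iff)

lemma abs_logW_diff_le:
  assumes "j \<in> J" "k \<in> J - {j}" "sep j k \<le> M"
  shows "\<bar>logW y j k - logW y' j k\<bar> \<le> ynorm a b J y y' / sg j * (M / 2 + 1) * sep j k"
proof -
  have k: "k \<in> J" "j \<noteq> k" using assms by auto
  define t where "t = ynorm a b J y y' / sg j"
  have sg: "0 < sg j" "0 < sg k" using sg_pos assms k by auto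
  have \<eta>: "0 < eta a b j k" using eta_pos[OF assms(1) k] .
  have t: "0 \<le> t" using ynorm_nonneg sg by (simp add: t_def)
  have "gam a b k / (eta a b j k)\<^sup>2 * \<bar>mu a b y j - mu a b y' j\<bar>
      \<le> gam a b k / (eta a b j k)\<^sup>2 * (sg j * ynorm a b J y y')"
    using mu_lipschitz[OF assms(1)] gam_pos[OF k(1)] by (intro mult_left_mono) auto
  also have "\<dots> = sep j k * sep j k * t"
    using sg \<eta> sg_mult_self[OF k(1)] by (simp add: t_def field_simps power2_eq_square)
  also have "\<dots> \<le> M * sep j k * t"
    using assms(3) sep_nonneg[OF assms(1) k(1)] t by (intro mult_right_mono) auto
  finally have move_j: "gam a b k / (eta a b j k)\<^sup>2 * \<bar>mu a b y j - mu a b y' j\<bar> \<le> M * sep j k * t" .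
  have "2 * \<bar>mu a b y k - mu a b y' k\<bar> / eta a b j k \<le> 2 * (sg k * ynorm a b J y y') / eta a b j k"
    using mu_lipschitz[OF k(1)] \<eta> by (intro divide_right_mono) auto
  also have "\<dots> = 2 * sep j k * t" using sg \<eta> by (simp add: t_def field_simps)
  finally have move_k: "2 * \<bar>mu a b y k - mu a b y' k\<bar> / eta a b j k \<le> 2 * sep j k * t" .
  have "\<bar>logW y j k - logW y' j k\<bar>
      = \<bar>ln (gap_factor (a k) (b k) (mu a b y k) (mu a b y j))
          - ln (gap_factor (a k) (b k) (mu a b y' k) (mu a b y' j))\<bar> / 2"
    by (simp add: logW_def diff_divide_distrib[symmetric])
  also have "\<dots> \<le> (M * sep j k * t + 2 * sep j k * t) / 2"
    using ln_gap_factor_at_mu_lipschitz[OF assms(1,2), of y y'] move_j move_k by argo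
  also have "\<dots> = t * (M / 2 + 1) * sep j k"
  proof -
    have eq: "(M * s * t + 2 * s * t) / 2 = t * (M / 2 + 1) * s" for s :: real
      by (simp add: field_simps)
    show ?thesis by (rule eq)
  qed
  finally show ?thesis by (simp add: t_def)
qed

lemma infsum_logW_lipschitz:
  assumes "j \<in> J" "\<And>k. k \<in> J - {j} \<Longrightarrow> sep j k \<le> M"
  shows "sg j * \<bar>(\<Sum>\<^sub>\<infinity>k\<in>J - {j}. logW y j k) - (\<Sum>\<^sub>\<infinity>k\<in>J - {j}. logW y' j k)\<bar>
           \<le> (M / 2 + 1) * ynorm a b J y y' * (\<Sum>\<^sub>\<infinity>k\<in>J - {j}. sep j k)"
proof -
  define c where "c = ynorm a b J y y' / sg j * (M / 2 + 1)"
  have "\<bar>(\<Sum>\<^sub>\<infinity>k\<in>J - {j}. logW y j k) - (\<Sum>\<^sub>\<infinity>k\<in>J - {j}. logW y' j k)\<bar>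
      \<le> (\<Sum>\<^sub>\<infinity>k\<in>J - {j}. c * sep j k)"
    using abs_logW_diff_le[OF assms(1) _ assms(2)] unfolding c_def
    by (intro abs_infsum_diff_le logW_summable summable_on_cmult_right sep_summable assms(1)) auto
  also have "\<dots> = c * (\<Sum>\<^sub>\<infinity>k\<in>J - {j}. sep j k)" by (rule infsum_cmult_right')
  finally have "sg j * \<bar>(\<Sum>\<^sub>\<infinity>k\<in>J - {j}. logW y j k) - (\<Sum>\<^sub>\<infinity>k\<in>J - {j}. logW y' j k)\<bar>
      \<le> sg j * (c * (\<Sum>\<^sub>\<infinity>k\<in>J - {j}. sep j k))"
    using sg_pos[OF assms(1)] by (intro mult_left_mono) auto
  also have "\<dots> = (M / 2 + 1) * ynorm a b J y y' * (\<Sum>\<^sub>\<infinity>k\<in>J - {j}. sep j k)"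
    using sg_pos[OF assms(1)] by (simp add: c_def)
  finally show ?thesis .
qed

lemma W_lipschitz:
  obtains L where "\<And>y y' j. j \<in> J \<Longrightarrow>
    (1 + eta0 j)\<^sup>2 * sg j * \<bar>W a b J y j - W a b J y' j\<bar> \<le> L * ynorm a b J y y'"
proof -
  obtain M where M: "0 \<le> M" "\<And>j k. j \<in> J \<Longrightarrow> k \<in> J \<Longrightarrow> k \<noteq> j \<Longrightarrow> sep j k \<le> M"
    using sep_bounded by blast
  obtain M2 where M2: "\<And>j. j \<in> J \<Longrightarrow> C j * (1 + (eta0 j)\<^sup>2) * (\<Sum>\<^sub>\<infinity>k\<in>J - {j}. sep j k) \<le> M2"
    using sep_interaction_bounded by blast
  have "(1 + eta0 j)\<^sup>2 * sg j * \<bar>W a b J y j - W a b J y' j\<bar> \<le> (2 * (M / 2 + 1) * M2) * ynorm a b J y y'"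
    if j: "j \<in> J" for y y' j
  proof -
    define N where "N = ynorm a b J y y'"
    define S where "S = (\<Sum>\<^sub>\<infinity>k\<in>J - {j}. sep j k)"
    define D where "D = (\<Sum>\<^sub>\<infinity>k\<in>J - {j}. logW y j k) - (\<Sum>\<^sub>\<infinity>k\<in>J - {j}. logW y' j k)"
    have sep_le: "\<And>k. k \<in> J - {j} \<Longrightarrow> sep j k \<le> M" using M(2) j by auto
    have "\<bar>W a b J y j - W a b J y' j\<bar> \<le> C j * \<bar>D\<bar>"
      unfolding D_def W_eq_exp[OF j]
      by (rule abs_exp_diff_le) (use W_le_C[OF j] W_eq_exp[OF j] in metis)+
    hence "sg j * \<bar>W a b J y j - W a b J y' j\<bar> \<le> C j * (sg j * \<bar>D\<bar>)"
      using sg_pos[OF j] mult_left_mono by fastforce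
    also have "\<dots> \<le> C j * ((M / 2 + 1) * N * S)"
      using infsum_logW_lipschitz[OF j sep_le, of y y'] C_ge_1[OF j]
      unfolding D_def N_def S_def by (intro mult_left_mono) auto
    finally have W_diff: "sg j * \<bar>W a b J y j - W a b J y' j\<bar> \<le> (M / 2 + 1) * N * (C j * S)"
      by (simp add: mult_ac)
    have sq_le: "(1 + eta0 j)\<^sup>2 \<le> 2 * (1 + (eta0 j)\<^sup>2)"
      using zero_le_power2[of "eta0 j - 1"] by (simp add: power2_sum power2_diff)
    have "(1 + eta0 j)\<^sup>2 * (sg j * \<bar>W a b J y j - W a b J y' j\<bar>)
        \<le> 2 * (1 + (eta0 j)\<^sup>2) * ((M / 2 + 1) * N * (C j * S))"
      by (rule mult_mono[OF sq_le W_diff]) (use sg_pos[OF j] in auto)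
    also have "\<dots> = 2 * (M / 2 + 1) * N * (C j * (1 + (eta0 j)\<^sup>2) * S)" by (simp add: field_simps)
    also have "\<dots> \<le> 2 * (M / 2 + 1) * N * M2"
      using M2[OF j] M(1) ynorm_nonneg unfolding S_def N_def by (intro mult_left_mono) auto
    finally show ?thesis by (simp add: N_def mult_ac)
  qed
  thus ?thesis using that by blast
qed

lemma K_nonneg: "0 \<le> K"
  by (simp add: K_def)

lemma K_le_weighted: "K \<le> K * (1 + eta0 j)"
  using K_nonneg eta_nonneg[of a b j 0] by (simp add: distrib_left)

lemma R_le_K: "R \<le> K"
  using R_bounds by linarith

lemma abs_mu_le: "j \<in> J \<Longrightarrow> \<bar>mu a b y j\<bar> \<le> K * (1 + eta0 j)"
  using abs_le_R[OF _ mu_mem] mult_right_mono[OF R_le_K, of "1 + eta0 j"] eta_nonneg[of a b j 0]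
  by (meson add_nonneg_nonneg order_trans zero_le_one)

lemma mu_lipschitz_K: "j \<in> J \<Longrightarrow> \<bar>mu a b y j - mu a b y' j\<bar> \<le> K * ynorm a b J y y'"
proof -
  assume j: "j \<in> J"
  have "sg j \<le> K" using sg_le_T[OF j] R_bounds R_le_K by linarith
  with mu_lipschitz[OF j, of y y'] ynorm_nonneg[of y y'] show ?thesis
    by (meson mult_right_mono order_trans)
qed

lemma Q1_term_bound: "k \<in> J \<Longrightarrow> \<bar>a k + b k - 2 * mu a b y k\<bar> \<le> T * ((1 + eta0 k) * sg k)"
proof -
  assume k: "k \<in> J"
  have "\<bar>a k + b k - 2 * mu a b y k\<bar> \<le> gam a b k"
    using mu_mem[OF k, of y] by (simp add: gam_def abs_le_iff)
  also have "\<dots> \<le> T * sg k" by (rule gam_le_T_sg[OF k])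
  also have "\<dots> \<le> T * ((1 + eta0 k) * sg k)" using sg_le_weight[OF k] T_nonneg by (rule mult_left_mono)
  finally show ?thesis .
qed

lemma Q2_term_bound:
  "k \<in> J \<Longrightarrow> \<bar>(a k)\<^sup>2 + (b k)\<^sup>2 - 2 * (mu a b y k)\<^sup>2\<bar> \<le> 4 * R * T * ((1 + eta0 k) * sg k)"
proof -
  assume k: "k \<in> J"
  define m where "m = mu a b y k"
  have m: "m \<in> {a k..b k}" using mu_mem[OF k] by (simp add: m_def)
  have ab: "a k \<in> {a k..b k}" "b k \<in> {a k..b k}" using gap_nonempty k by auto
  have d: "\<bar>a k - m\<bar> \<le> gam a b k" "\<bar>b k - m\<bar> \<le> gam a b k" using m by (auto simp: gam_def)
  have s: "\<bar>a k + m\<bar> \<le> 2 * (R * (1 + eta0 k))" "\<bar>b k + m\<bar> \<le> 2 * (R * (1 + eta0 k))"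
    using abs_le_R[OF k m] abs_le_R[OF k ab(1)] abs_le_R[OF k ab(2)]
      abs_triangle_ineq[of "a k" m] abs_triangle_ineq[of "b k" m] by linarith+
  have "\<bar>(a k - m) * (a k + m)\<bar> \<le> gam a b k * (2 * (R * (1 + eta0 k)))"
    "\<bar>(b k - m) * (b k + m)\<bar> \<le> gam a b k * (2 * (R * (1 + eta0 k)))"
    unfolding abs_mult using gam_pos[OF k] by (intro mult_mono d s; simp)+
  moreover have "(a k)\<^sup>2 + (b k)\<^sup>2 - 2 * m\<^sup>2 = (a k - m) * (a k + m) + (b k - m) * (b k + m)"
    by (simp add: power2_eq_square algebra_simps)
  ultimately have "\<bar>(a k)\<^sup>2 + (b k)\<^sup>2 - 2 * m\<^sup>2\<bar> \<le> 4 * R * (1 + eta0 k) * gam a b k"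
    by (simp add: algebra_simps)
  also have "\<dots> \<le> 4 * R * (1 + eta0 k) * (T * sg k)"
    using gam_le_T_sg[OF k] R_bounds(1) eta_nonneg[of a b k 0] by (intro mult_left_mono) auto
  finally show ?thesis by (simp add: m_def mult_ac)
qed

lemma Q1_summable: "(\<lambda>k. a k + b k - 2 * mu a b y k) summable_on J"
  by (rule weighted_bound(1)[OF T_nonneg Q1_term_bound])

lemma Q2_summable: "(\<lambda>k. (a k)\<^sup>2 + (b k)\<^sup>2 - 2 * (mu a b y k)\<^sup>2) summable_on J"
  by (rule weighted_bound(1)[OF _ Q2_term_bound]) (use R_bounds(1) T_nonneg in auto)

lemma abs_Q1_le: "\<bar>Q1 a b J y\<bar> \<le> K"
proof -
  have "\<bar>Q1 a b J y\<bar> \<le> T * T"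
    unfolding Q1_def by (rule weighted_bound(2)[OF T_nonneg Q1_term_bound])
  thus ?thesis using R_bounds by (simp add: power2_eq_square)
qed

lemma abs_Q2_le: "\<bar>Q2 a b J y\<bar> \<le> K"
proof -
  have "\<bar>Q2 a b J y\<bar> \<le> 4 * R * T * T"
    unfolding Q2_def
    by (rule weighted_bound(2)[OF _ Q2_term_bound]) (use R_bounds(1) T_nonneg in auto)
  also have "\<dots> \<le> 4 * R * R"
    using R_bounds by (simp add: mult.assoc power2_eq_square mult_left_mono)
  finally show ?thesis by (simp add: K_def power2_eq_square)
qed

lemma Q1_term_diff_bound:
  "k \<in> J \<Longrightarrow> \<bar>(a k + b k - 2 * mu a b y k) - (a k + b k - 2 * mu a b y' k)\<bar>
     \<le> 2 * ynorm a b J y y' * ((1 + eta0 k) * sg k)"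
proof -
  assume k: "k \<in> J"
  have "\<bar>(a k + b k - 2 * mu a b y k) - (a k + b k - 2 * mu a b y' k)\<bar>
      = 2 * \<bar>mu a b y k - mu a b y' k\<bar>" by (cases "mu a b y k \<le> mu a b y' k") auto
  also have "\<dots> \<le> 2 * (sg k * ynorm a b J y y')" using mu_lipschitz[OF k] by simp
  also have "\<dots> \<le> 2 * ynorm a b J y y' * ((1 + eta0 k) * sg k)"
    using mult_right_mono[OF sg_le_weight[OF k] ynorm_nonneg] by (simp add: mult_ac)
  finally show ?thesis .
qed

lemma Q2_term_diff_bound:
  "k \<in> J \<Longrightarrow> \<bar>((a k)\<^sup>2 + (b k)\<^sup>2 - 2 * (mu a b y k)\<^sup>2) - ((a k)\<^sup>2 + (b k)\<^sup>2 - 2 * (mu a b y' k)\<^sup>2)\<bar>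
     \<le> 4 * R * ynorm a b J y y' * ((1 + eta0 k) * sg k)"
proof -
  assume k: "k \<in> J"
  define m m' where "m = mu a b y k" and "m' = mu a b y' k"
  have "\<bar>m + m'\<bar> \<le> 2 * (R * (1 + eta0 k))"
    using abs_le_R[OF k mu_mem[OF k, of y]] abs_le_R[OF k mu_mem[OF k, of y']]
      abs_triangle_ineq[of m m'] unfolding m_def m'_def by linarith
  moreover have "\<bar>m - m'\<bar> \<le> sg k * ynorm a b J y y'" using mu_lipschitz[OF k] by (simp add: m_def m'_def)
  ultimately have prod: "\<bar>m - m'\<bar> * \<bar>m + m'\<bar> \<le> (sg k * ynorm a b J y y') * (2 * (R * (1 + eta0 k)))"
    using sg_pos[OF k] ynorm_nonneg by (intro mult_mono) auto
  have "((a k)\<^sup>2 + (b k)\<^sup>2 - 2 * m\<^sup>2) - ((a k)\<^sup>2 + (b k)\<^sup>2 - 2 * m'\<^sup>2) = - 2 * ((m - m') * (m + m'))"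
    by (simp add: power2_eq_square algebra_simps)
  hence "\<bar>((a k)\<^sup>2 + (b k)\<^sup>2 - 2 * m\<^sup>2) - ((a k)\<^sup>2 + (b k)\<^sup>2 - 2 * m'\<^sup>2)\<bar> = 2 * (\<bar>m - m'\<bar> * \<bar>m + m'\<bar>)"
    by (simp add: abs_mult)
  also have "\<dots> \<le> 2 * ((sg k * ynorm a b J y y') * (2 * (R * (1 + eta0 k))))"
    by (rule mult_left_mono[OF prod]) simp
  also have "\<dots> = 4 * R * ynorm a b J y y' * ((1 + eta0 k) * sg k)" by (simp add: algebra_simps)
  finally show ?thesis by (simp add: m_def m'_def)
qed

lemma Q1_lipschitz: "\<bar>Q1 a b J y - Q1 a b J y'\<bar> \<le> K * ynorm a b J y y'"
proof -
  have "\<bar>Q1 a b J y - Q1 a b J y'\<bar> \<le> 2 * ynorm a b J y y' * T"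
    unfolding Q1_def
    by (rule weighted_diff_bound[OF Q1_summable Q1_summable _ Q1_term_diff_bound])
       (use ynorm_nonneg in simp)
  also have "\<dots> \<le> K * ynorm a b J y y'"
    using mult_right_mono[of "2 * T" K, OF _ ynorm_nonneg] R_bounds by (simp add: mult_ac)
  finally show ?thesis .
qed

lemma Q2_lipschitz: "\<bar>Q2 a b J y - Q2 a b J y'\<bar> \<le> K * ynorm a b J y y'"
proof -
  have "\<bar>Q2 a b J y - Q2 a b J y'\<bar> \<le> 4 * R * ynorm a b J y y' * T"
    unfolding Q2_def
    by (rule weighted_diff_bound[OF Q2_summable Q2_summable _ Q2_term_diff_bound])
       (use R_bounds(1) ynorm_nonneg in simp)
  also have "\<dots> \<le> 4 * R * ynorm a b J y y' * R"
    using R_bounds ynorm_nonneg by (intro mult_left_mono) auto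
  finally show ?thesis by (simp add: K_def power2_eq_square mult_ac)
qed

text \<open>The weight \<open>1 + \<eta>\<^sub>j\<^sub>0\<close> of the Lipschitz bound of a prefactor is absorbed by
  \<open>(1 + \<eta>\<^sub>j\<^sub>0) C\<^sub>j \<gamma>\<^sub>j\<^sup>1\<^sup>/\<^sup>2 \<le> T\<close>, the weight \<open>(1 + \<eta>\<^sub>j\<^sub>0)\<^sup>2\<close> of its size by \<open>W_lipschitz\<close>.\<close>

lemma prefactor_times_W_lipschitz:
  assumes j: "j \<in> J"
    and W_lip: "(1 + eta0 j)\<^sup>2 * sg j * \<bar>W a b J y j - W a b J y' j\<bar> \<le> L * ynorm a b J y y'"
    and f_lip: "\<bar>f - f'\<bar> \<le> B * (1 + eta0 j) * ynorm a b J y y'"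
    and f_bound: "\<bar>f'\<bar> \<le> A * (1 + eta0 j)\<^sup>2" and "0 \<le> A"
  shows "sg j * \<bar>f * W a b J y j - f' * W a b J y' j\<bar> \<le> (B * T + A * L) * ynorm a b J y y'"
proof -
  define N where "N = ynorm a b J y y'"
  define E where "E = 1 + eta0 j"
  have E: "0 < E" using eta_nonneg[of a b j 0] by (simp add: E_def)
  have "0 \<le> E * (B * N)"
    using order_trans[OF abs_ge_zero f_lip] by (simp add: N_def E_def mult_ac)
  hence BN: "0 \<le> B * N" using E by (simp add: zero_le_mult_iff)
  have "f * W a b J y j - f' * W a b J y' j
      = (f - f') * W a b J y j + f' * (W a b J y j - W a b J y' j)"
    by (simp add: algebra_simps)
  hence "\<bar>f * W a b J y j - f' * W a b J y' j\<bar>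
      \<le> \<bar>f - f'\<bar> * W a b J y j + \<bar>f'\<bar> * \<bar>W a b J y j - W a b J y' j\<bar>"
    using W_pos[OF j, of y] abs_triangle_ineq by (metis abs_mult abs_of_pos)
  hence "sg j * \<bar>f * W a b J y j - f' * W a b J y' j\<bar>
      \<le> \<bar>f - f'\<bar> * W a b J y j * sg j + \<bar>f'\<bar> * (sg j * \<bar>W a b J y j - W a b J y' j\<bar>)"
    using mult_left_mono[OF _ less_imp_le[OF sg_pos[OF j]]] by (fastforce simp: algebra_simps)
  also have "\<bar>f - f'\<bar> * W a b J y j * sg j \<le> B * E * N * C j * sg j"
    using f_lip W_le_C[OF j, of y] W_pos[OF j, of y] sg_pos[OF j]
    by (intro mult_right_mono mult_mono) (auto simp: N_def E_def)
  also have "\<dots> = B * N * (E * C j * sg j)" by (simp add: mult_ac)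
  also have "\<dots> \<le> B * N * T"
    using craig_term_le_T[OF j] BN by (intro mult_left_mono) (auto simp: E_def)
  also have "\<bar>f'\<bar> * (sg j * \<bar>W a b J y j - W a b J y' j\<bar>)
      \<le> A * E\<^sup>2 * (sg j * \<bar>W a b J y j - W a b J y' j\<bar>)"
    using f_bound sg_pos[OF j] by (intro mult_right_mono) (auto simp: E_def)
  also have "\<dots> \<le> A * (L * N)"
    using mult_left_mono[OF W_lip \<open>0 \<le> A\<close>] by (simp add: E_def N_def mult.assoc)
  finally show ?thesis by (simp add: N_def algebra_simps)
qed

lemma Psi_lipschitz:
  "\<exists>L. \<forall>y y'. \<forall>j\<in>J. sg j * \<bar>Psi a b J y j - Psi a b J y' j\<bar> \<le> L * ynorm a b J y y'"
proof -
  obtain LW where LW: "\<And>y y' j. j \<in> J \<Longrightarrow>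
      (1 + eta0 j)\<^sup>2 * sg j * \<bar>W a b J y j - W a b J y' j\<bar> \<le> LW * ynorm a b J y y'"
    using W_lipschitz by blast
  have "sg j * \<bar>Psi a b J y j - Psi a b J y' j\<bar> \<le> (2 * K * T + 2 * K * LW) * ynorm a b J y y'"
    if j: "j \<in> J" for y y' j
  proof -
    have KE: "K * ynorm a b J y y' \<le> K * (1 + eta0 j) * ynorm a b J y y'"
      using K_le_weighted ynorm_nonneg by (rule mult_right_mono)
    have KE2: "K * (1 + eta0 j) \<le> K * (1 + eta0 j)\<^sup>2"
      using K_nonneg eta_nonneg[of a b j 0] by (intro mult_left_mono) (auto simp: power2_eq_square)
    have "\<bar>(Q1 a b J y / 2 + mu a b y j) - (Q1 a b J y' / 2 + mu a b y' j)\<bar>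
        \<le> (2 * K) * (1 + eta0 j) * ynorm a b J y y'"
      using Q1_lipschitz[of y y'] mu_lipschitz_K[OF j, of y y'] KE K_nonneg ynorm_nonneg[of y y']
      by (intro abs_leI) (auto dest!: abs_le_D1 abs_le_D2)
    moreover have "\<bar>Q1 a b J y' / 2 + mu a b y' j\<bar> \<le> (2 * K) * (1 + eta0 j)\<^sup>2"
      using abs_Q1_le[of y'] abs_mu_le[OF j, of y'] K_le_weighted[of j] KE2
      by (intro abs_leI) (auto dest!: abs_le_D1 abs_le_D2)
    ultimately show ?thesis
      unfolding Psi_def using K_nonneg by (intro prefactor_times_W_lipschitz[OF j LW[OF j]]) auto
  qed
  thus ?thesis by blast
qed

lemma Xi_lipschitz:
  "\<exists>L. \<forall>y y'. \<forall>j\<in>J. sg j * \<bar>Xi a b J y j - Xi a b J y' j\<bar> \<le> L * ynorm a b J y y'"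
proof -
  obtain LW where LW: "\<And>y y' j. j \<in> J \<Longrightarrow>
      (1 + eta0 j)\<^sup>2 * sg j * \<bar>W a b J y j - W a b J y' j\<bar> \<le> LW * ynorm a b J y y'"
    using W_lipschitz by blast
  have "sg j * \<bar>Xi a b J y j - Xi a b J y' j\<bar>
      \<le> ((K + 4 * K\<^sup>2) * T + (K + 2 * K\<^sup>2) * LW) * ynorm a b J y y'"
    if j: "j \<in> J" for y y' j
  proof -
    have E: "1 \<le> 1 + eta0 j" using eta_nonneg[of a b j 0] by simp
    have bounds: "\<bar>Q1 a b J z\<bar> \<le> K * (1 + eta0 j)" "\<bar>Q2 a b J z\<bar> \<le> K * (1 + eta0 j)"
      "\<bar>mu a b z j\<bar> \<le> K * (1 + eta0 j)" for z
      using abs_Q1_le abs_Q2_le abs_mu_le[OF j] K_le_weighted[of j] by (auto intro: order_trans)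
    have "\<bar>(Q2 a b J y / 4 + (Q1 a b J y)\<^sup>2 / 8 - mu a b y j * Q1 a b J y / 2 + (mu a b y j)\<^sup>2)
        - (Q2 a b J y' / 4 + (Q1 a b J y')\<^sup>2 / 8 - mu a b y' j * Q1 a b J y' / 2 + (mu a b y' j)\<^sup>2)\<bar>
        \<le> (K + 4 * K\<^sup>2) * (1 + eta0 j) * ynorm a b J y y'"
      by (rule abs_xi_poly_diff_le[OF bounds(1,3) bounds(1,3) Q2_lipschitz Q1_lipschitz
            mu_lipschitz_K[OF j] K_nonneg E ynorm_nonneg])
    moreover have "\<bar>Q2 a b J y' / 4 + (Q1 a b J y')\<^sup>2 / 8 - mu a b y' j * Q1 a b J y' / 2
        + (mu a b y' j)\<^sup>2\<bar> \<le> (K + 2 * K\<^sup>2) * (1 + eta0 j)\<^sup>2"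
      by (rule abs_xi_poly_le[OF bounds(2,1,3) K_nonneg E])
    ultimately show ?thesis
      unfolding Xi_def using K_nonneg by (intro prefactor_times_W_lipschitz[OF j LW[OF j]]) auto
  qed
  thus ?thesis by blast
qed

end

theorem proposition5p9:
  fixes E :: "real set" and a b :: "nat \<Rightarrow> real" and J :: "nat set" and \<delta> :: real
  assumes "closed E"
    and "0 \<in> J"
    and "\<forall>j\<in>J. a j < b j"
    and "inj_on (\<lambda>j. {a j<..<b j}) J"
    and "(\<lambda>j. {a j<..<b j}) ` J = {C \<in> components (- E). bounded C}"
    and "\<delta> > 0"
    and "\<forall>k\<in>J. Cc a b J k < \<infinity>"
    and "(\<lambda>k. (1 + eta a b k 0) * real_of_ereal (Cc a b J k) * sqrt (gam a b k)) summable_on J"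
    and "\<exists>M. \<forall>j\<in>J.
           (\<lambda>k. (real_of_ereal (Cc a b J j))^3 * (real_of_ereal (Cc a b J k))\<^sup>2
                 * (1 + (eta a b 0 j)\<^sup>2) * sqrt (gam a b j) * sqrt (gam a b k) / eta a b j k)
             summable_on (J - {j}) \<and>
           (\<Sum>\<^sub>\<infinity>k\<in>J - {j}. (real_of_ereal (Cc a b J j))^3 * (real_of_ereal (Cc a b J k))\<^sup>2
                 * (1 + (eta a b 0 j)\<^sup>2) * sqrt (gam a b j) * sqrt (gam a b k) / eta a b j k) \<le> M"
    and "\<exists>M. \<forall>j\<in>J. \<forall>k\<in>J. k \<noteq> j \<longrightarrow>
           sqrt (gam a b j) * sqrt (gam a b k) \<le> M * (gam a b j powr \<delta> * eta a b j k)"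
  shows "(\<exists>L. \<forall>y y'. \<forall>j\<in>J.
            sqrt (gam a b j) * \<bar>Psi a b J y j - Psi a b J y' j\<bar> \<le> L * ynorm a b J y y')
       \<and> (\<exists>L. \<forall>y y'. \<forall>j\<in>J.
            sqrt (gam a b j) * \<bar>Xi a b J y j - Xi a b J y' j\<bar> \<le> L * ynorm a b J y y')"
proof -
  interpret craig_gaps a b J \<delta>
    by unfold_locales (use assms(2,3,6-10) in auto)
  show ?thesis using Psi_lipschitz Xi_lipschitz by blast
qed

end
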